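(* Let $\sigma\colon S\curvearrowright A$ be an algebraic action satisfying the standing assumptions, with globalization $\tilde\sigma\colon\mathscr S\curvearrowright\mathscr A$ such that $\mathscr A$ is generated by $\bigcup_{g\in\mathscr S}\tilde\sigma_g(A)$. Let $\mathbb I=\{[A:C]:C\in\mathcal C\}$ and let $\mathbb Z[\mathbb I^{-1}]$ be the subring of $\mathbb Q$ generated by $\mathbb Z$ and $\{1/n:n\in\mathbb I\}$. Then the canonical map $\mathbb Z[\mathbb I^{-1}]\otimes A\to\mathbb Z[\mathbb I^{-1}]\otimes\mathscr A$, $1\otimes x\mapsto1\otimes x$, is an isomorphism.
   Context: Algebraic action $\sigma\colon S\curvearrowright A$: left cancellative monoid $S$, abelian group $A$, monoid homomorphism $s\mapsto\sigma_s$ into injective endomorphisms of $A$. Constructible subgroups $\mathcal C$: smallest family of subgroups of $A$ containing $A$ and closed under $C\mapsto\sigma_s(C)$ and $C\mapsto\sigma_s^{-1}C=\{a\in A:\sigma_s(a)\in C\}$. Standing assumptions: $\sigma$ faithful, non-automorphic unless $S$ is a group, satisfies (FI): $[A:\sigma_s(A)]<\infty$ for all $s\in S$ (so all $C\in\mathcal C$ have finite index), and has a globalization: a group $\mathscr S\supseteq S$ generated by $S$, an abelian group $\mathscr A\supseteq A$, and an action $\tilde\sigma$ of $\mathscr S$ on $\mathscr A$ by automorphisms with $\tilde\sigma_s|_A=\sigma_s$ for $s\in S$, satisfying (JF): if $C\in\mathcal C$, $g\in\mathscr S$ and $\tilde\sigma_g$ fixes $C$ pointwise, then $g=1$. *)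

theory Defs
  imports Complex_Main "HOL-Algebra.Generated_Groups"
begin

definition is_subgrp :: "'a::ab_group_add set \<Rightarrow> bool" where
  "is_subgrp H \<longleftrightarrow> 0 \<in> H \<and> (\<forall>x\<in>H. \<forall>y\<in>H. x - y \<in> H)"

definition gen_subgrp :: "'a::ab_group_add set \<Rightarrow> 'a set" where
  "gen_subgrp X = \<Inter>{H. is_subgrp H \<and> X \<subseteq> H}"

definition cosets_in :: "'a::ab_group_add set \<Rightarrow> 'a set \<Rightarrow> 'a set set" where
  "cosets_in A C = (\<lambda>a. (\<lambda>c. a + c) ` C) ` A"

definition index_in :: "'a::ab_group_add set \<Rightarrow> 'a set \<Rightarrow> nat" where
  "index_in A C = card (cosets_in A C)"

inductive_set constructible ::
  "'s set \<Rightarrow> ('s \<Rightarrow> 'a \<Rightarrow> 'a) \<Rightarrow> 'a set \<Rightarrow> 'a set set"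
  for S :: "'s set" and \<sigma> :: "'s \<Rightarrow> 'a \<Rightarrow> 'a" and A :: "'a set" where
  top: "A \<in> constructible S \<sigma> A"
| img: "C \<in> constructible S \<sigma> A \<Longrightarrow> s \<in> S \<Longrightarrow> \<sigma> s ` C \<in> constructible S \<sigma> A"
| preimg: "C \<in> constructible S \<sigma> A \<Longrightarrow> s \<in> S \<Longrightarrow> {a \<in> A. \<sigma> s a \<in> C} \<in> constructible S \<sigma> A"

definition is_subring_rat :: "rat set \<Rightarrow> bool" where
  "is_subring_rat T \<longleftrightarrow> 1 \<in> T \<and> (\<forall>x\<in>T. \<forall>y\<in>T. x - y \<in> T \<and> x * y \<in> T)"

definition Z_inv :: "nat set \<Rightarrow> rat set" where
  "Z_inv I = \<Inter>{T. is_subring_rat T \<and> range of_int \<subseteq> T \<and> (\<lambda>n. 1 / of_nat n) ` I \<subseteq> T}"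

section \<open>Tensor product R \<otimes>_Z M for R \<subseteq> Q and M a subgroup of an ab_group_add type\<close>

text \<open>Free abelian group on R \<times> M: finitely supported integer-valued functions.\<close>
definition free_ab :: "rat set \<Rightarrow> 'a set \<Rightarrow> ((rat \<times> 'a) \<Rightarrow> int) set" where
  "free_ab R M = {f. finite {x. f x \<noteq> 0} \<and> {x. f x \<noteq> 0} \<subseteq> R \<times> M}"

definition delta :: "'b \<Rightarrow> 'b \<Rightarrow> int" where
  "delta p = (\<lambda>x. if x = p then 1 else 0)"

definition tgens :: "rat set \<Rightarrow> 'a::ab_group_add set \<Rightarrow> ((rat \<times> 'a) \<Rightarrow> int) set" where
  "tgens R M =
     {(\<lambda>x. delta (r + r', m) x - delta (r, m) x - delta (r', m) x) | r r' m. r \<in> R \<and> r' \<in> R \<and> m \<in> M}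
   \<union> {(\<lambda>x. delta (r, m + m') x - delta (r, m) x - delta (r, m') x) | r m m'. r \<in> R \<and> m \<in> M \<and> m' \<in> M}"

definition is_zsub :: "('b \<Rightarrow> int) set \<Rightarrow> bool" where
  "is_zsub H \<longleftrightarrow> (\<lambda>_. 0) \<in> H \<and> (\<forall>f\<in>H. \<forall>g\<in>H. (\<lambda>x. f x - g x) \<in> H)"

definition trel :: "rat set \<Rightarrow> 'a::ab_group_add set \<Rightarrow> ((rat \<times> 'a) \<Rightarrow> int) set" where
  "trel R M = \<Inter>{H. is_zsub H \<and> tgens R M \<subseteq> H}"

text \<open>Class of a formal sum in the tensor product.\<close>
definition tcls :: "rat set \<Rightarrow> 'a::ab_group_add set \<Rightarrow> ((rat \<times> 'a) \<Rightarrow> int) \<Rightarrow> ((rat \<times> 'a) \<Rightarrow> int) set" where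
  "tcls R M f = {g \<in> free_ab R M. (\<lambda>x. g x - f x) \<in> trel R M}"

definition tensor :: "rat set \<Rightarrow> 'a::ab_group_add set \<Rightarrow> ((rat \<times> 'a) \<Rightarrow> int) set set" where
  "tensor R M = tcls R M ` free_ab R M"

text \<open>Canonical map R \<otimes> M \<rightarrow> R \<otimes> N for M \<subseteq> N, induced by r \<otimes> x \<mapsto> r \<otimes> x.\<close>
definition tensor_map :: "rat set \<Rightarrow> 'a::ab_group_add set \<Rightarrow> ((rat \<times> 'a) \<Rightarrow> int) set \<Rightarrow> ((rat \<times> 'a) \<Rightarrow> int) set" where
  "tensor_map R N X = tcls R N (SOME f. f \<in> X)"

end

theory Submission
  imports Defs "HOL-Algebra.Multiplicative_Group" "HOL-Library.Function_Algebras"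
begin

(*
  Let D be the set of positive integers N with 1/N \<in> R, where R = \<int>[\<I>\<inverse>]. Every element of
  a subring of \<rat> has a denominator in D (by Bezout), so every element of R \<otimes> M is a pure
  tensor (1/N) \<otimes> b with b \<in> M, and (1/N) \<otimes> b = (1/NK) \<otimes> Kb for K \<in> D.

  Surjectivity: for s \<in> S and n = [A : \<sigma>\<^sub>s A] we have n A \<subseteq> \<sigma>\<^sub>s A, so n \<sigma>\<^sub>s\<inverse> A \<subseteq> A.
  Since n \<in> D, every element x of the group generated by the \<sigma>\<^sub>g A, which is the whole
  ambient group, has a multiple Kx \<in> A with K \<in> D, and then (1/N) \<otimes> x = (1/NK) \<otimes> Kx comes
  from R \<otimes> A.

  Injectivity: a formal sum \<Sum> c (r, m) with common denominator N has the "cleared" value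
  \<Sum> c (Nr) m. On the bilinearity relations over the ambient group this value is D-torsion, so
  it is D-torsion on every relation. Hence a formal sum over A that is a relation over the
  ambient group equals (1/N) \<otimes> b in R \<otimes> A with Kb = 0 for some K \<in> D, i.e. it is zero.
*)

definition additive_group :: "'a::ab_group_add monoid" where
  "additive_group = \<lparr>carrier = UNIV, monoid.mult = (+), one = 0\<rparr>"

lemma additive_group_simps [simp]:
  "carrier additive_group = UNIV" "mult additive_group = (+)" "one additive_group = 0"
  by (simp_all add: additive_group_def)

lemma comm_group_additive_group: "comm_group additive_group"
  by (rule comm_groupI) (auto simp: algebra_simps intro: exI[of _ "- x" for x])

interpretation addgrp: comm_group "additive_group :: 'a::ab_group_add monoid"
  by (rule comm_group_additive_group)

lemma inv_additive_group [simp]: "inv\<^bsub>additive_group\<^esub> x = - x"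
  by (simp add: addgrp.inv_equality)

definition int_scale :: "int \<Rightarrow> 'a::ab_group_add \<Rightarrow> 'a" where
  "int_scale k a = a [^]\<^bsub>additive_group\<^esub> k"

lemma int_scale_0 [simp]: "int_scale 0 a = 0"
  by (simp add: int_scale_def)

lemma int_scale_1 [simp]: "int_scale 1 a = a"
  by (simp add: int_scale_def)

lemma int_scale_add: "int_scale (k + l) a = int_scale k a + int_scale l a"
  by (simp add: int_scale_def addgrp.int_pow_mult)

lemma int_scale_diff_left: "int_scale (k - l) a = int_scale k a - int_scale l a"
  by (simp add: int_scale_def addgrp.int_pow_diff)

lemma int_scale_mult: "int_scale (k * l) a = int_scale k (int_scale l a)"
  by (simp add: int_scale_def addgrp.int_pow_pow mult.commute)

lemma int_scale_add_right: "int_scale k (a + b) = int_scale k a + int_scale k b"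
  using addgrp.int_pow_distrib[of a b k] by (simp add: int_scale_def)

lemma int_scale_diff_right: "int_scale k (a - b) = int_scale k a - int_scale k b"
  using int_scale_add_right[of k "a - b" b] by (simp add: algebra_simps)

lemma (in additive) int_scale: "f (int_scale k a) = int_scale k (f a)"
proof -
  have "f \<in> hom additive_group additive_group"
    by (simp add: hom_def add)
  then show ?thesis
    using hom_int_pow[of f additive_group additive_group a k] addgrp.is_group
    by (simp add: int_scale_def)
qed

lemma additive_int_scale: "additive (int_scale k)"
  by (simp add: additive_def int_scale_add_right)

lemma int_scale_eq_of_int_mult: "int_scale k (x :: 'a::ring_1) = of_int k * x"
proof (induction k rule: int_induct[where k = 0])
  case (step1 i)
  then show ?case using int_scale_add[of i 1 x] by (simp add: algebra_simps)
next
  case (step2 i)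
  then show ?case using int_scale_diff_left[of i 1 x] by (simp add: algebra_simps)
qed simp

lemma int_scale_fun_apply: "int_scale k f x = int_scale k (f x)"
proof -
  interpret additive "\<lambda>f. f x"
    by (simp add: additive_def)
  show ?thesis
    by (rule int_scale)
qed

lemma sum_fun_apply: "(\<Sum>i\<in>X. f i) x = (\<Sum>i\<in>X. f i x)"
  by (induction X rule: infinite_finite_induct) simp_all

lemma is_subgrp_zero: "is_subgrp H \<Longrightarrow> 0 \<in> H"
  by (simp add: is_subgrp_def)

lemma is_subgrp_diff: "is_subgrp H \<Longrightarrow> x \<in> H \<Longrightarrow> y \<in> H \<Longrightarrow> x - y \<in> H"
  by (simp add: is_subgrp_def)

lemma is_subgrp_uminus: "is_subgrp H \<Longrightarrow> x \<in> H \<Longrightarrow> - x \<in> H"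
  using is_subgrp_diff[of H 0 x] by (simp add: is_subgrp_zero)

lemma is_subgrp_add: "is_subgrp H \<Longrightarrow> x \<in> H \<Longrightarrow> y \<in> H \<Longrightarrow> x + y \<in> H"
  using is_subgrp_diff[of H x "- y"] by (simp add: is_subgrp_uminus)

lemma is_subgrp_sum: "is_subgrp H \<Longrightarrow> (\<And>x. x \<in> X \<Longrightarrow> g x \<in> H) \<Longrightarrow> sum g X \<in> H"
  by (induction X rule: infinite_finite_induct) (auto simp: is_subgrp_zero is_subgrp_add)

lemma is_subgrp_UNIV: "is_subgrp UNIV"
  by (simp add: is_subgrp_def)

lemma is_subgrp_zero_singleton: "is_subgrp {0}"
  by (simp add: is_subgrp_def)

lemma is_subgrp_Inter: "(\<And>H. H \<in> \<H> \<Longrightarrow> is_subgrp H) \<Longrightarrow> is_subgrp (\<Inter>\<H>)"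
  by (simp add: is_subgrp_def)

lemma is_subgrp_image:
  assumes "additive f" "is_subgrp H"
  shows "is_subgrp (f ` H)"
  unfolding is_subgrp_def
proof (intro conjI ballI)
  show "0 \<in> f ` H"
    using assms additive.zero is_subgrp_zero by (metis image_eqI)
next
  fix x y assume "x \<in> f ` H" "y \<in> f ` H"
  then show "x - y \<in> f ` H"
    using assms by (auto simp flip: additive.diff intro: is_subgrp_diff)
qed

lemma gen_subgrp_least: "is_subgrp H \<Longrightarrow> X \<subseteq> H \<Longrightarrow> gen_subgrp X \<subseteq> H"
  unfolding gen_subgrp_def by blast

lemma subgroup_additive_group_iff: "subgroup H additive_group \<longleftrightarrow> is_subgrp H"
proof
  assume "subgroup H additive_group"
  then show "is_subgrp H"
    unfolding is_subgrp_def
    by (metis additive_group_simps(2,3) diff_conv_add_uminus inv_additive_group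
        subgroup.m_closed subgroup.m_inv_closed subgroup.one_closed)
next
  assume "is_subgrp H"
  then show "subgroup H additive_group"
    by (intro addgrp.subgroupI) (auto simp: is_subgrp_uminus is_subgrp_add dest: is_subgrp_zero)
qed

lemma is_subgrp_int_scale: "is_subgrp H \<Longrightarrow> x \<in> H \<Longrightarrow> int_scale k x \<in> H"
  unfolding int_scale_def
  by (simp add: addgrp.subgroup_int_pow_closed flip: subgroup_additive_group_iff)

lemma int_scale_index_mem:
  assumes A: "is_subgrp A" and C: "is_subgrp C" and CA: "C \<subseteq> A" and a: "a \<in> A"
  shows "int_scale (int (index_in A C)) a \<in> C"
proof -
  define G where "G = (additive_group :: 'a monoid)\<lparr>carrier := A\<rparr>"
  have A': "subgroup A additive_group" and C': "subgroup C additive_group"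
    using A C by (simp_all add: subgroup_additive_group_iff)
  have "group G"
    unfolding G_def by (rule addgrp.subgroup_imp_group[OF A'])
  then interpret G: comm_group G
    by (rule group.group_comm_groupI) (simp add: G_def add.commute)
  have "C \<lhd> G"
    using addgrp.subgroup_incl[OF C' A' CA] unfolding G_def[symmetric]
    by (rule G.subgroup_imp_normal)
  then interpret normal C G .
  interpret Q: group "G Mod C" by (rule factorgroup_is_group)
  have aG: "a \<in> carrier G"
    using a by (simp add: G_def)
  have "carrier (G Mod C) = cosets_in A C"
    unfolding carrier_FactGroup cosets_in_def r_coset_def by (auto simp: G_def add.commute)
  moreover have "C #>\<^bsub>G\<^esub> a \<in> carrier (G Mod C)"
    using aG by (simp add: carrier_FactGroup)
  ultimately have "(C #>\<^bsub>G\<^esub> a) [^]\<^bsub>G Mod C\<^esub> index_in A C = C"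
    using Q.pow_order_eq_1 by (simp add: order_def index_in_def)
  then have "a [^]\<^bsub>G\<^esub> index_in A C \<in> C"
    using G.coset_join1 aG subgroup_axioms by (simp add: FactGroup_pow)
  then show ?thesis
    by (simp add: int_scale_def int_pow_int G_def flip: addgrp.nat_pow_consistent)
qed

lemma index_in_pos:
  assumes "is_subgrp A" "finite (cosets_in A C)"
  shows "0 < index_in A C"
  using assms is_subgrp_zero[OF assms(1)] by (auto simp: index_in_def cosets_in_def card_gt_0_iff)

section \<open>Saturation with respect to a multiplicative set of integers\<close>

definition saturation :: "nat set \<Rightarrow> 'a::ab_group_add set \<Rightarrow> 'a set" where
  "saturation D B = {x. \<exists>K\<in>D. int_scale (int K) x \<in> B}"

locale mult_closed_nats =
  fixes D :: "nat set"
  assumes one_mem: "1 \<in> D" and mult_mem: "K \<in> D \<Longrightarrow> L \<in> D \<Longrightarrow> K * L \<in> D"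
begin

lemma subset_saturation: "B \<subseteq> saturation D B"
  unfolding saturation_def using one_mem by force

lemma saturation_int_scaleD:
  assumes "K \<in> D" "int_scale (int K) x \<in> saturation D B"
  shows "x \<in> saturation D B"
proof -
  obtain L where "L \<in> D" "int_scale (int L) (int_scale (int K) x) \<in> B"
    using assms(2) unfolding saturation_def by blast
  then show ?thesis
    unfolding saturation_def using assms(1) mult_mem by (force simp flip: int_scale_mult)
qed

lemma is_subgrp_saturation:
  assumes B: "is_subgrp B"
  shows "is_subgrp (saturation D B)"
  unfolding is_subgrp_def
proof (intro conjI ballI)
  show "0 \<in> saturation D B"
    using B subset_saturation is_subgrp_zero by blast
next
  fix x y assume "x \<in> saturation D B" "y \<in> saturation D B"
  then obtain K L where KL: "K \<in> D" "L \<in> D" "int_scale (int K) x \<in> B" "int_scale (int L) y \<in> B"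
    unfolding saturation_def by blast
  have "int_scale (int (K * L)) (x - y)
      = int_scale (int L) (int_scale (int K) x) - int_scale (int K) (int_scale (int L) y)"
    by (simp add: int_scale_diff_right mult.commute flip: int_scale_mult)
  also have "\<dots> \<in> B"
    using KL B by (simp add: is_subgrp_diff is_subgrp_int_scale)
  finally show "x - y \<in> saturation D B"
    unfolding saturation_def using KL mult_mem by blast
qed

lemma image_saturation_subset:
  assumes f: "additive f" and fB: "f ` B \<subseteq> saturation D B"
  shows "f ` saturation D B \<subseteq> saturation D B"
proof
  fix y assume "y \<in> f ` saturation D B"
  then obtain x K where x: "y = f x" "K \<in> D" "int_scale (int K) x \<in> B"
    unfolding saturation_def by blast
  then have "int_scale (int K) y = f (int_scale (int K) x)"
    by (simp add: additive.int_scale[OF f])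
  then have "int_scale (int K) y \<in> saturation D B"
    using fB x(3) by blast
  with x(2) show "y \<in> saturation D B"
    by (rule saturation_int_scaleD)
qed

lemma left_inverse_image_subset_saturation:
  assumes A: "is_subgrp A" and f: "additive f" and g: "additive g"
    and inverse: "\<And>x. g (f x) = x" and fA: "f ` A \<subseteq> A" and index: "index_in A (f ` A) \<in> D"
  shows "g ` A \<subseteq> saturation D A"
proof
  fix y assume "y \<in> g ` A"
  then obtain a where a: "a \<in> A" "y = g a"
    by blast
  have "int_scale (int (index_in A (f ` A))) a \<in> f ` A"
    using int_scale_index_mem[OF A is_subgrp_image[OF f A] fA a(1)] .
  then obtain b where b: "b \<in> A" "int_scale (int (index_in A (f ` A))) a = f b"
    by blast
  have "int_scale (int (index_in A (f ` A))) y = g (f b)"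
    using a(2) b(2) by (simp flip: additive.int_scale[OF g])
  then have "int_scale (int (index_in A (f ` A))) y \<in> A"
    using b(1) inverse by simp
  then show "y \<in> saturation D A"
    unfolding saturation_def using index by blast
qed

lemma generate_image_subset_saturation:
  assumes grp: "group G" and S: "S \<subseteq> carrier G"
    and additive: "\<forall>g\<in>carrier G. additive (\<sigma> g)" and act_one: "\<sigma> \<one>\<^bsub>G\<^esub> = id"
    and act_mult: "\<forall>g\<in>carrier G. \<forall>h\<in>carrier G. \<sigma> (g \<otimes>\<^bsub>G\<^esub> h) = \<sigma> g \<circ> \<sigma> h"
    and A: "is_subgrp A" and A_inv: "\<forall>s\<in>S. \<sigma> s ` A \<subseteq> A"
    and index: "\<forall>s\<in>S. index_in A (\<sigma> s ` A) \<in> D"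
    and g: "g \<in> generate G S"
  shows "\<sigma> g ` A \<subseteq> saturation D A"
  using g
proof (induction rule: generate.induct)
  case one
  then show ?case
    using act_one subset_saturation by simp
next
  case (incl s)
  then show ?case
    using A_inv subset_saturation by blast
next
  case (inv s)
  then have s: "s \<in> carrier G"
    using S by blast
  have "\<sigma> (inv\<^bsub>G\<^esub> s) (\<sigma> s x) = x" for x
    using act_mult act_one s group.l_inv[OF grp s] group.inv_closed[OF grp s]
    by (metis comp_apply id_apply)
  with A show ?case
    using additive s group.inv_closed[OF grp s] A_inv index inv
    by (intro left_inverse_image_subset_saturation) blast+
next
  case (eng g h)
  have "g \<in> carrier G" "h \<in> carrier G"
    using eng.hyps group.generate_in_carrier[OF grp S] by blast+
  then have "\<sigma> (g \<otimes>\<^bsub>G\<^esub> h) ` A = \<sigma> g ` \<sigma> h ` A"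
    using act_mult by (simp add: image_comp)
  also have "\<dots> \<subseteq> \<sigma> g ` saturation D A"
    using eng.IH(2) by blast
  also have "\<dots> \<subseteq> saturation D A"
    using additive \<open>g \<in> carrier G\<close> eng.IH(1) by (intro image_saturation_subset) auto
  finally show ?case .
qed

end

definition inv_nats :: "rat set \<Rightarrow> nat set" where
  "inv_nats R = {N. 0 < N \<and> 1 / of_nat N \<in> R}"

lemma of_nat_mult_Ints: "of_nat N * r \<in> \<int> \<Longrightarrow> of_nat (K * N) * r \<in> \<int>"
  unfolding of_nat_mult mult.assoc by (rule Ints_mult[OF Ints_of_nat])

locale rat_subring =
  fixes R :: "rat set"
  assumes is_subring: "is_subring_rat R"
begin

lemma subring_one: "1 \<in> R"
  using is_subring by (simp add: is_subring_rat_def)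

lemma subring_diff: "x \<in> R \<Longrightarrow> y \<in> R \<Longrightarrow> x - y \<in> R"
  using is_subring by (simp add: is_subring_rat_def)

lemma subring_mult: "x \<in> R \<Longrightarrow> y \<in> R \<Longrightarrow> x * y \<in> R"
  using is_subring by (simp add: is_subring_rat_def)

lemma is_subgrp_subring: "is_subgrp R"
  unfolding is_subgrp_def using subring_one subring_diff[of 1 1] by (simp add: subring_diff)

lemma subring_of_int: "of_int k \<in> R"
  using is_subgrp_int_scale[OF is_subgrp_subring subring_one, of k]
  by (simp add: int_scale_eq_of_int_mult)

sublocale mult_closed_nats "inv_nats R"
proof
  show "1 \<in> inv_nats R"
    by (simp add: inv_nats_def subring_one)
next
  fix K L assume "K \<in> inv_nats R" "L \<in> inv_nats R"
  then show "K * L \<in> inv_nats R"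
    unfolding inv_nats_def using subring_mult by fastforce
qed

lemma denominator_exists:
  assumes "r \<in> R"
  shows "\<exists>N\<in>inv_nats R. of_nat N * r \<in> \<int>"
proof -
  obtain p q where pq: "quotient_of r = (p, q)"
    by fastforce
  have q: "q > 0" and r: "r = of_int p / of_int q"
    using pq quotient_of_denom_pos quotient_of_div by blast+
  obtain u v where uv: "u * p + v * q = 1"
    using bezout_int[of p q] quotient_of_coprime[OF pq] by auto
  have "1 / of_int q = of_int (u * p + v * q) / (of_int q :: rat)"
    using uv by simp
  also have "\<dots> = of_int u * r + of_int v"
    using q r by (simp add: field_simps)
  also have "\<dots> = of_int u * r - of_int (- v)"
    by simp
  also have "\<dots> \<in> R"
    using assms by (intro subring_diff subring_mult subring_of_int)
  finally have "nat q \<in> inv_nats R"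
    using q by (simp add: inv_nats_def)
  moreover have "of_nat (nat q) * r \<in> \<int>"
    using q r by simp
  ultimately show ?thesis ..
qed

lemma common_denominator:
  "finite X \<Longrightarrow> X \<subseteq> R \<Longrightarrow> \<exists>N\<in>inv_nats R. \<forall>r\<in>X. of_nat N * r \<in> \<int>"
proof (induction X rule: finite_induct)
  case empty
  then show ?case using one_mem by blast
next
  case (insert x X)
  then obtain N where N: "N \<in> inv_nats R" "\<forall>r\<in>X. of_nat N * r \<in> \<int>"
    by auto
  obtain L where L: "L \<in> inv_nats R" "of_nat L * x \<in> \<int>"
    using insert.prems denominator_exists by auto
  have "of_nat (N * L) * x \<in> \<int>"
    by (rule of_nat_mult_Ints[OF L(2)])
  then have "of_nat (L * N) * x \<in> \<int>"
    by (simp only: mult.commute[of N L])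
  with N(2) have "\<forall>r\<in>insert x X. of_nat (L * N) * r \<in> \<int>"
    using of_nat_mult_Ints[of N _ L] by blast
  with N(1) L(1) show ?case
    using mult_mem by blast
qed

lemma common_denominator_fst:
  assumes "finite Y" "Y \<subseteq> R \<times> M"
  shows "\<exists>N\<in>inv_nats R. \<forall>x\<in>Y. of_nat N * fst x \<in> \<int>"
proof -
  have "fst ` Y \<subseteq> R"
    using assms(2) by auto
  then show ?thesis
    using common_denominator[OF finite_imageI[OF assms(1)]] by auto
qed

end

lemma is_subring_rat_Z_inv: "is_subring_rat (Z_inv I)"
  unfolding is_subring_rat_def Z_inv_def by auto

lemma Z_inv_inverse: "n \<in> I \<Longrightarrow> 1 / of_nat n \<in> Z_inv I"
  unfolding Z_inv_def by auto

text \<open>The floor only reads off the integer \<open>N r\<close>; all lemmas assume \<open>of_nat N * r \<in> \<int>\<close>.\<close>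

definition numer_over :: "nat \<Rightarrow> rat \<Rightarrow> int" where
  "numer_over N r = \<lfloor>of_nat N * r\<rfloor>"

lemma of_int_numer_over: "of_nat N * r \<in> \<int> \<Longrightarrow> of_int (numer_over N r) = of_nat N * r"
  unfolding numer_over_def by (erule Ints_cases) simp

lemma numer_over_mult:
  assumes "of_nat N * r \<in> \<int>"
  shows "numer_over (N * K) r = int K * numer_over N r"
proof -
  have "of_nat (N * K) * r = of_nat K * (of_nat N * r)"
    by (simp add: ac_simps)
  also have "\<dots> = of_int (int K * numer_over N r)"
    using assms by (simp add: of_int_numer_over)
  finally show ?thesis
    unfolding numer_over_def by (simp only: floor_of_int)
qed

lemma numer_over_add:
  assumes "of_nat N * r \<in> \<int>" "of_nat N * s \<in> \<int>"
  shows "numer_over N (r + s) = numer_over N r + numer_over N s"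
proof -
  have "of_nat N * (r + s) = of_int (numer_over N r + numer_over N s)"
    using assms by (simp add: of_int_numer_over distrib_left)
  then show ?thesis
    unfolding numer_over_def[of N "r + s"] by simp
qed

lemma int_scale_numer_over_inverse:
  "0 < N \<Longrightarrow> of_nat N * r \<in> \<int> \<Longrightarrow> int_scale (numer_over N r) (1 / of_nat N) = r"
  by (simp add: int_scale_eq_of_int_mult of_int_numer_over)

lemma is_zsub_iff_is_subgrp: "is_zsub H \<longleftrightarrow> is_subgrp H"
  unfolding is_zsub_def is_subgrp_def by (simp add: fun_diff_def zero_fun_def)

lemma is_subgrp_trel: "is_subgrp (trel R M)"
  unfolding trel_def is_zsub_iff_is_subgrp by (rule is_subgrp_Inter) blast

lemma tgens_subset_trel: "tgens R M \<subseteq> trel R M"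
  unfolding trel_def by auto

lemma trel_least: "is_subgrp H \<Longrightarrow> tgens R M \<subseteq> H \<Longrightarrow> trel R M \<subseteq> H"
  unfolding trel_def is_zsub_iff_is_subgrp by blast

lemma trel_mono: "M \<subseteq> M' \<Longrightarrow> trel R M \<subseteq> trel R M'"
proof (rule trel_least[OF is_subgrp_trel])
  assume "M \<subseteq> M'"
  then have "tgens R M \<subseteq> tgens R M'"
    unfolding tgens_def by blast
  then show "tgens R M \<subseteq> trel R M'"
    using tgens_subset_trel by blast
qed

definition tensor_eq ::
  "rat set \<Rightarrow> 'a::ab_group_add set \<Rightarrow> (rat \<times> 'a \<Rightarrow> int) \<Rightarrow> (rat \<times> 'a \<Rightarrow> int) \<Rightarrow> bool" where
  "tensor_eq R M f g \<longleftrightarrow> f - g \<in> trel R M"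

lemma tensor_eq_refl [simp]: "tensor_eq R M f f"
  by (simp add: tensor_eq_def is_subgrp_zero[OF is_subgrp_trel])

lemma tensor_eq_sym: "tensor_eq R M f g \<Longrightarrow> tensor_eq R M g f"
  unfolding tensor_eq_def using is_subgrp_uminus[OF is_subgrp_trel] by fastforce

lemma tensor_eq_trans [trans]: "tensor_eq R M f g \<Longrightarrow> tensor_eq R M g h \<Longrightarrow> tensor_eq R M f h"
  unfolding tensor_eq_def using is_subgrp_add[OF is_subgrp_trel] by fastforce

lemma tensor_eq_add:
  "tensor_eq R M f f' \<Longrightarrow> tensor_eq R M g g' \<Longrightarrow> tensor_eq R M (f + g) (f' + g')"
  unfolding tensor_eq_def using is_subgrp_add[OF is_subgrp_trel] by (fastforce simp: algebra_simps)

lemma tensor_eq_diff: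
  "tensor_eq R M f f' \<Longrightarrow> tensor_eq R M g g' \<Longrightarrow> tensor_eq R M (f - g) (f' - g')"
  unfolding tensor_eq_def using is_subgrp_diff[OF is_subgrp_trel] by (fastforce simp: algebra_simps)

lemma tensor_eq_int_scale: "tensor_eq R M f g \<Longrightarrow> tensor_eq R M (int_scale k f) (int_scale k g)"
  unfolding tensor_eq_def using is_subgrp_int_scale[OF is_subgrp_trel]
  by (fastforce simp flip: int_scale_diff_right)

lemma tensor_eq_sum:
  "(\<And>x. x \<in> X \<Longrightarrow> tensor_eq R M (f x) (g x)) \<Longrightarrow> tensor_eq R M (\<Sum>x\<in>X. f x) (\<Sum>x\<in>X. g x)"
  by (induction X rule: infinite_finite_induct) (simp_all add: tensor_eq_add)

lemma tensor_eq_mono: "tensor_eq R M f g \<Longrightarrow> M \<subseteq> M' \<Longrightarrow> tensor_eq R M' f g"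
  unfolding tensor_eq_def using trel_mono by blast

lemma tensor_eq_delta_add_left:
  assumes "r \<in> R" "r' \<in> R" "m \<in> M"
  shows "tensor_eq R M (delta (r + r', m)) (delta (r, m) + delta (r', m))"
proof -
  have "(\<lambda>x. delta (r + r', m) x - delta (r, m) x - delta (r', m) x) \<in> tgens R M"
    using assms unfolding tgens_def by blast
  then show ?thesis
    unfolding tensor_eq_def using tgens_subset_trel by (auto simp: fun_diff_def diff_diff_eq)
qed

lemma tensor_eq_delta_add_right:
  assumes "r \<in> R" "m \<in> M" "m' \<in> M"
  shows "tensor_eq R M (delta (r, m + m')) (delta (r, m) + delta (r, m'))"
proof -
  have "(\<lambda>x. delta (r, m + m') x - delta (r, m) x - delta (r, m') x) \<in> tgens R M"
    using assms unfolding tgens_def by blast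
  then show ?thesis
    unfolding tensor_eq_def using tgens_subset_trel by (auto simp: fun_diff_def diff_diff_eq)
qed

definition tensor_additive ::
  "rat set \<Rightarrow> 'a::ab_group_add set \<Rightarrow> 'b::ab_group_add set \<Rightarrow> ('b \<Rightarrow> rat \<times> 'a \<Rightarrow> int) \<Rightarrow> bool" where
  "tensor_additive R M P F \<longleftrightarrow> (\<forall>x\<in>P. \<forall>y\<in>P. tensor_eq R M (F (x + y)) (F x + F y))"

lemma tensor_additive_delta_left: "m \<in> M \<Longrightarrow> tensor_additive R M R (\<lambda>r. delta (r, m))"
  by (simp add: tensor_additive_def tensor_eq_delta_add_left)

lemma tensor_additive_delta_right: "r \<in> R \<Longrightarrow> tensor_additive R M M (\<lambda>m. delta (r, m))"
  by (simp add: tensor_additive_def tensor_eq_delta_add_right)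

lemma tensor_additive_zero:
  assumes F: "tensor_additive R M P F" and "0 \<in> P"
  shows "tensor_eq R M (F 0) 0"
proof -
  have "tensor_eq R M (F (0 + 0) - F 0) (F 0 + F 0 - F 0)"
    using F assms(2) unfolding tensor_additive_def by (blast intro: tensor_eq_diff tensor_eq_refl)
  then have "tensor_eq R M 0 (F 0)"
    by simp
  then show ?thesis
    by (rule tensor_eq_sym)
qed

lemma tensor_additive_int_scale:
  assumes F: "tensor_additive R M P F" and P: "is_subgrp P" and x: "x \<in> P"
  shows "tensor_eq R M (F (int_scale k x)) (int_scale k (F x))"
proof (induction k rule: int_induct[where k = 0])
  case base
  show ?case
    unfolding int_scale_0 by (rule tensor_additive_zero[OF F is_subgrp_zero[OF P]])
next
  case (step1 i)
  have "tensor_eq R M (F (int_scale i x + x)) (F (int_scale i x) + F x)"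
    using F P x is_subgrp_int_scale unfolding tensor_additive_def by blast
  also have "tensor_eq R M \<dots> (int_scale i (F x) + F x)"
    using step1.IH by (rule tensor_eq_add) simp
  finally show ?case
    unfolding int_scale_add int_scale_1 .
next
  case (step2 i)
  have add: "tensor_eq R M (F (int_scale (i - 1) x + x)) (F (int_scale (i - 1) x) + F x)"
    using F P x is_subgrp_int_scale unfolding tensor_additive_def by blast
  have "tensor_eq R M (F (int_scale (i - 1) x)) (F (int_scale (i - 1) x) + F x - F x)"
    unfolding add_diff_cancel by (rule tensor_eq_refl)
  also have "tensor_eq R M \<dots> (F (int_scale (i - 1) x + x) - F x)"
    using tensor_eq_sym[OF add] tensor_eq_refl by (rule tensor_eq_diff)
  also have "int_scale (i - 1) x + x = int_scale i x"
    using int_scale_add[of "i - 1" 1 x] by simp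
  also have "tensor_eq R M (F (int_scale i x) - F x) (int_scale i (F x) - F x)"
    using step2.IH tensor_eq_refl by (rule tensor_eq_diff)
  finally show ?case
    unfolding int_scale_diff_left int_scale_1 .
qed

lemma tensor_additive_sum:
  assumes F: "tensor_additive R M P F" and P: "is_subgrp P" and x: "\<And>i. i \<in> X \<Longrightarrow> x i \<in> P"
  shows "tensor_eq R M (F (\<Sum>i\<in>X. x i)) (\<Sum>i\<in>X. F (x i))"
  using x
proof (induction X rule: infinite_finite_induct)
  case (insert i X)
  have "x i \<in> P" "(\<Sum>i\<in>X. x i) \<in> P"
    using insert.prems by (auto intro: is_subgrp_sum[OF P])
  then have "tensor_eq R M (F (x i + (\<Sum>i\<in>X. x i))) (F (x i) + F (\<Sum>i\<in>X. x i))"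
    using F unfolding tensor_additive_def by blast
  also have "tensor_eq R M \<dots> (F (x i) + (\<Sum>i\<in>X. F (x i)))"
    using insert by (intro tensor_eq_add) simp_all
  finally show ?case
    unfolding sum.insert[OF insert.hyps] .
qed (use tensor_additive_zero[OF F is_subgrp_zero[OF P]] in simp_all)

section \<open>Clearing denominators\<close>

definition supp :: "('b \<Rightarrow> int) \<Rightarrow> 'b set" where
  "supp f = {x. f x \<noteq> 0}"

lemma free_ab_iff: "f \<in> free_ab R M \<longleftrightarrow> finite (supp f) \<and> supp f \<subseteq> R \<times> M"
  by (simp add: free_ab_def supp_def)

lemma free_ab_mono: "M \<subseteq> M' \<Longrightarrow> free_ab R M \<subseteq> free_ab R M'"
  unfolding free_ab_def by blast

lemma supp_diff: "supp (f - g) \<subseteq> supp f \<union> supp g"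
  by (auto simp: supp_def)

lemma free_ab_diff: "f \<in> free_ab R M \<Longrightarrow> g \<in> free_ab R M \<Longrightarrow> f - g \<in> free_ab R M"
  unfolding free_ab_iff using supp_diff[of f g]
  by (meson finite_Un finite_subset le_sup_iff order_trans)

lemma free_ab_delta: "p \<in> R \<times> M \<Longrightarrow> delta p \<in> free_ab R M"
  by (simp add: free_ab_def delta_def)

lemma delta_expansion:
  assumes "finite (supp f)"
  shows "f = (\<Sum>x\<in>supp f. int_scale (f x) (delta x))"
proof
  fix y
  have "(\<Sum>x\<in>supp f. int_scale (f x) (delta x)) y = (\<Sum>x\<in>supp f. if y = x then f x else 0)"
    unfolding sum_fun_apply int_scale_fun_apply int_scale_eq_of_int_mult[where 'a = int]
    by (intro sum.cong) (simp_all add: delta_def)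
  also have "\<dots> = f y"
    using assms by (simp add: supp_def)
  finally show "f y = (\<Sum>x\<in>supp f. int_scale (f x) (delta x)) y" ..
qed

text \<open>The image of \<open>N \<cdot> f\<close> under \<open>r \<otimes> m \<mapsto> r m\<close>, which makes sense in the ambient group as soon
  as \<open>N\<close> clears the denominators of all \<open>r\<close> occurring in \<open>Y\<close>.\<close>

definition cleared_sum ::
  "nat \<Rightarrow> (rat \<times> 'a::ab_group_add) set \<Rightarrow> (rat \<times> 'a \<Rightarrow> int) \<Rightarrow> 'a" where
  "cleared_sum N Y f = (\<Sum>x\<in>Y. int_scale (f x * numer_over N (fst x)) (snd x))"

lemma cleared_sum_supp: "finite Y \<Longrightarrow> supp f \<subseteq> Y \<Longrightarrow> cleared_sum N Y f = cleared_sum N (supp f) f"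
  unfolding cleared_sum_def by (rule sum.mono_neutral_right) (auto simp: supp_def)

lemma cleared_sum_diff: "cleared_sum N Y (f - g) = cleared_sum N Y f - cleared_sum N Y g"
  by (simp add: cleared_sum_def left_diff_distrib int_scale_diff_left sum_subtractf)

lemma cleared_sum_mult:
  assumes "\<forall>x\<in>Y. of_nat N * fst x \<in> \<int>"
  shows "cleared_sum (N * K) Y f = int_scale (int K) (cleared_sum N Y f)"
  unfolding cleared_sum_def additive.sum[OF additive_int_scale]
  using assms
  by (intro sum.cong) (simp_all add: numer_over_mult mult.left_commute flip: int_scale_mult)

lemma cleared_sum_delta:
  assumes "finite Y" "p \<in> Y"
  shows "cleared_sum N Y (delta p) = int_scale (numer_over N (fst p)) (snd p)"
proof -
  have "cleared_sum N Y (delta p)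
      = (\<Sum>x\<in>Y. if x = p then int_scale (numer_over N (fst p)) (snd p) else 0)"
    unfolding cleared_sum_def by (intro sum.cong) (simp_all add: delta_def)
  then show ?thesis
    using assms by simp
qed

lemma cleared_sum_mem:
  assumes M: "is_subgrp M" and Y: "snd ` Y \<subseteq> M"
  shows "cleared_sum N Y f \<in> M"
  unfolding cleared_sum_def using Y by (intro is_subgrp_sum[OF M] is_subgrp_int_scale[OF M]) auto

context rat_subring
begin

lemma tensor_eq_int_scale_delta:
  assumes M: "is_subgrp M" and r: "r \<in> R" and m: "m \<in> M"
    and N: "N \<in> inv_nats R" and Nr: "of_nat N * r \<in> \<int>"
  shows "tensor_eq R M (int_scale c (delta (r, m)))
    (delta (1 / of_nat N, int_scale (c * numer_over N r) m))"
proof -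
  define j where "j = numer_over N r"
  have iN: "1 / of_nat N \<in> R" and "0 < N"
    using N by (simp_all add: inv_nats_def)
  then have r_eq: "int_scale j (1 / of_nat N) = r"
    using Nr by (simp add: int_scale_numer_over_inverse j_def)
  have "tensor_eq R M (delta (r, m)) (int_scale j (delta (1 / of_nat N, m)))"
    using tensor_additive_int_scale[OF tensor_additive_delta_left[OF m] is_subgrp_subring iN, of j]
    unfolding r_eq .
  then have "tensor_eq R M (int_scale c (delta (r, m)))
      (int_scale (c * j) (delta (1 / of_nat N, m)))"
    unfolding int_scale_mult by (rule tensor_eq_int_scale)
  also have "tensor_eq R M \<dots> (delta (1 / of_nat N, int_scale (c * j) m))"
    using tensor_eq_sym[OF tensor_additive_int_scale[OF tensor_additive_delta_right[OF iN] M m]] .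
  finally show ?thesis
    unfolding j_def .
qed

lemma tensor_eq_delta_cleared_sum:
  assumes M: "is_subgrp M" and h: "h \<in> free_ab R M"
    and N: "N \<in> inv_nats R" and Nh: "\<forall>x\<in>supp h. of_nat N * fst x \<in> \<int>"
  shows "tensor_eq R M h (delta (1 / of_nat N, cleared_sum N (supp h) h))"
proof -
  have fin: "finite (supp h)" and sub: "supp h \<subseteq> R \<times> M"
    using h by (simp_all add: free_ab_iff)
  have iN: "1 / of_nat N \<in> R"
    using N by (simp add: inv_nats_def)
  have "tensor_eq R M (\<Sum>x\<in>supp h. int_scale (h x) (delta x))
     (\<Sum>x\<in>supp h. delta (1 / of_nat N, int_scale (h x * numer_over N (fst x)) (snd x)))"
  proof (rule tensor_eq_sum)
    fix x assume "x \<in> supp h"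
    then show "tensor_eq R M (int_scale (h x) (delta x))
      (delta (1 / of_nat N, int_scale (h x * numer_over N (fst x)) (snd x)))"
      using sub Nh tensor_eq_int_scale_delta[OF M _ _ N, of "fst x" "snd x"] by auto
  qed
  also have "tensor_eq R M \<dots> (delta (1 / of_nat N, cleared_sum N (supp h) h))"
    unfolding cleared_sum_def using sub
    by (intro tensor_eq_sym[OF tensor_additive_sum[OF tensor_additive_delta_right[OF iN] M]])
      (auto intro!: is_subgrp_int_scale[OF M])
  finally show ?thesis
    using delta_expansion[OF fin] by simp
qed

lemma tensor_eq_delta_rescale:
  assumes M: "is_subgrp M" and N: "N \<in> inv_nats R" and K: "K \<in> inv_nats R" and b: "b \<in> M"
  shows "tensor_eq R M (delta (1 / of_nat N, b)) (delta (1 / of_nat (N * K), int_scale (int K) b))"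
proof -
  have iNK: "1 / of_nat (N * K) \<in> R"
    using mult_mem[OF N K] by (simp add: inv_nats_def)
  have eq: "int_scale (int K) (1 / of_nat (N * K) :: rat) = 1 / of_nat N"
    using K by (simp add: int_scale_eq_of_int_mult inv_nats_def)
  have "tensor_eq R M (delta (1 / of_nat N, b)) (int_scale (int K) (delta (1 / of_nat (N * K), b)))"
    using tensor_additive_int_scale[OF tensor_additive_delta_left[OF b] is_subgrp_subring iNK,
        of "int K"]
    unfolding eq .
  also have "tensor_eq R M \<dots> (delta (1 / of_nat (N * K), int_scale (int K) b))"
    using tensor_eq_sym[OF tensor_additive_int_scale[OF tensor_additive_delta_right[OF iNK] M b]] .
  finally show ?thesis .
qed

end

section \<open>Relations have torsion cleared sums\<close>

context rat_subring
begin

lemma cleared_sum_torsion_transfer: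
  assumes N: "N \<in> inv_nats R" and N': "N' \<in> inv_nats R"
    and Nf: "\<forall>x\<in>supp f. of_nat N * fst x \<in> \<int>" and N'f: "\<forall>x\<in>supp f. of_nat N' * fst x \<in> \<int>"
    and T: "cleared_sum N (supp f) f \<in> saturation (inv_nats R) {0}"
  shows "cleared_sum N' (supp f) f \<in> saturation (inv_nats R) {0}"
proof -
  have "int_scale (int N) (cleared_sum N' (supp f) f) = cleared_sum (N' * N) (supp f) f"
    using N'f by (simp add: cleared_sum_mult)
  also have "\<dots> = int_scale (int N') (cleared_sum N (supp f) f)"
    using Nf by (simp add: cleared_sum_mult mult.commute)
  also have "\<dots> \<in> saturation (inv_nats R) {0}"
    using T is_subgrp_saturation[OF is_subgrp_zero_singleton] by (rule is_subgrp_int_scale[rotated])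
  finally show ?thesis
    using N by (rule saturation_int_scaleD[rotated])
qed

definition vanishing_sums :: "(rat \<times> 'a::ab_group_add \<Rightarrow> int) set" where
  "vanishing_sums = {f \<in> free_ab R UNIV. \<forall>N\<in>inv_nats R.
     (\<forall>x\<in>supp f. of_nat N * fst x \<in> \<int>) \<longrightarrow> cleared_sum N (supp f) f \<in> saturation (inv_nats R) {0}}"

lemma vanishing_sumsI:
  assumes f: "f \<in> free_ab R UNIV" and Y: "finite Y" "supp f \<subseteq> Y"
    and N: "N \<in> inv_nats R" "\<forall>x\<in>Y. of_nat N * fst x \<in> \<int>"
    and T: "cleared_sum N Y f \<in> saturation (inv_nats R) {0}"
  shows "f \<in> vanishing_sums"
  unfolding vanishing_sums_def
proof (intro CollectI conjI f ballI impI)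
  fix N' assume N': "N' \<in> inv_nats R" "\<forall>x\<in>supp f. of_nat N' * fst x \<in> \<int>"
  have "\<forall>x\<in>supp f. of_nat N * fst x \<in> \<int>"
    using N(2) Y(2) by blast
  moreover have "cleared_sum N (supp f) f \<in> saturation (inv_nats R) {0}"
    using T cleared_sum_supp[OF Y] by simp
  ultimately show "cleared_sum N' (supp f) f \<in> saturation (inv_nats R) {0}"
    using cleared_sum_torsion_transfer[OF N(1) N'(1) _ N'(2)] by blast
qed

lemma is_subgrp_vanishing_sums: "is_subgrp (vanishing_sums :: (rat \<times> 'a::ab_group_add \<Rightarrow> int) set)"
  unfolding is_subgrp_def
proof (intro conjI ballI)
  let ?T = "saturation (inv_nats R) {0} :: 'a set"
  have T: "is_subgrp ?T"
    by (rule is_subgrp_saturation[OF is_subgrp_zero_singleton])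
  show "(0 :: rat \<times> 'a \<Rightarrow> int) \<in> vanishing_sums"
  proof (rule vanishing_sumsI)
    show "cleared_sum 1 {} 0 \<in> ?T"
      using is_subgrp_zero[OF T] by (simp add: cleared_sum_def)
  qed (use one_mem in \<open>simp_all add: free_ab_iff supp_def\<close>)
next
  fix f g :: "rat \<times> 'a \<Rightarrow> int"
  assume f: "f \<in> vanishing_sums" and g: "g \<in> vanishing_sums"
  let ?Y = "supp f \<union> supp g"
  let ?T = "saturation (inv_nats R) {0} :: 'a set"
  have free: "f \<in> free_ab R UNIV" "g \<in> free_ab R UNIV"
    using f g by (simp_all add: vanishing_sums_def)
  then have Y: "finite ?Y" "?Y \<subseteq> R \<times> UNIV"
    by (simp_all add: free_ab_iff)
  then obtain N where N: "N \<in> inv_nats R" "\<forall>x\<in>?Y. of_nat N * fst x \<in> \<int>"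
    using common_denominator_fst by blast
  have "cleared_sum N ?Y h \<in> ?T" if "h \<in> vanishing_sums" "supp h \<subseteq> ?Y" for h
  proof -
    have "\<forall>x\<in>supp h. of_nat N * fst x \<in> \<int>"
      using N(2) that(2) by blast
    then have "cleared_sum N (supp h) h \<in> ?T"
      using that(1) N(1) unfolding vanishing_sums_def by blast
    then show ?thesis
      using cleared_sum_supp[OF Y(1) that(2)] by simp
  qed
  then have "cleared_sum N ?Y f - cleared_sum N ?Y g \<in> ?T"
    using f g by (intro is_subgrp_diff[OF is_subgrp_saturation[OF is_subgrp_zero_singleton]]) auto
  then have "cleared_sum N ?Y (f - g) \<in> ?T"
    by (simp only: cleared_sum_diff)
  with free_ab_diff[OF free] Y(1) supp_diff N show "f - g \<in> vanishing_sums"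
    by (rule vanishing_sumsI)
qed

lemma three_deltas_vanish:
  assumes p: "{p1, p2, p3} \<subseteq> R \<times> UNIV"
    and zero: "\<And>N. \<forall>x\<in>{p1, p2, p3}. of_nat N * fst x \<in> \<int> \<Longrightarrow>
      int_scale (numer_over N (fst p1)) (snd p1) - int_scale (numer_over N (fst p2)) (snd p2)
        - int_scale (numer_over N (fst p3)) (snd p3) = 0"
  shows "(\<lambda>x. delta p1 x - delta p2 x - delta p3 x) \<in> vanishing_sums"
proof -
  let ?f = "delta p1 - delta p2 - delta p3"
  have supp: "supp ?f \<subseteq> {p1, p2, p3}"
    by (auto simp: supp_def delta_def)
  then have free: "?f \<in> free_ab R UNIV"
    using p by (auto simp: free_ab_iff intro: finite_subset)
  obtain N where N: "N \<in> inv_nats R" "\<forall>x\<in>{p1, p2, p3}. of_nat N * fst x \<in> \<int>"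
    using common_denominator_fst[of "{p1, p2, p3}"] p by blast
  have "cleared_sum N {p1, p2, p3} ?f = 0"
    unfolding cleared_sum_diff using zero[OF N(2)] by (simp add: cleared_sum_delta)
  then have "cleared_sum N {p1, p2, p3} ?f \<in> saturation (inv_nats R) {0}"
    using subset_saturation by blast
  with free supp N have "?f \<in> vanishing_sums"
    by (intro vanishing_sumsI) simp_all
  then show ?thesis
    by (simp only: fun_diff_def)
qed

lemma tgens_subset_vanishing_sums: "tgens R UNIV \<subseteq> vanishing_sums"
proof
  fix g :: "rat \<times> 'a \<Rightarrow> int"
  assume "g \<in> tgens R UNIV"
  then consider (left) r r' m where "r \<in> R" "r' \<in> R"
      "g = (\<lambda>x. delta (r + r', m) x - delta (r, m) x - delta (r', m) x)"
    | (right) r m m' where "r \<in> R"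
      "g = (\<lambda>x. delta (r, m + m') x - delta (r, m) x - delta (r, m') x)"
    unfolding tgens_def by blast
  then show "g \<in> vanishing_sums"
  proof cases
    case left
    have "r + r' \<in> R"
      using subring_diff[OF left(1) subring_diff[OF subring_diff[OF left(2) left(2)] left(2)]]
      by simp
    then show ?thesis
      unfolding left(3) using left(1,2)
      by (intro three_deltas_vanish) (auto simp: numer_over_add int_scale_add)
  next
    case right
    show ?thesis
      unfolding right(2) using right(1)
      by (intro three_deltas_vanish) (auto simp: int_scale_add_right)
  qed
qed

lemma trel_subset_vanishing_sums: "trel R UNIV \<subseteq> vanishing_sums"
  by (rule trel_least[OF is_subgrp_vanishing_sums tgens_subset_vanishing_sums])

lemma trel_restrict_subgroup:
  assumes A: "is_subgrp A" and h: "h \<in> free_ab R A" and rel: "h \<in> trel R UNIV"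
  shows "h \<in> trel R A"
proof -
  have "finite (supp h)" "supp h \<subseteq> R \<times> A"
    using h by (simp_all add: free_ab_iff)
  then obtain N where N: "N \<in> inv_nats R" "\<forall>x\<in>supp h. of_nat N * fst x \<in> \<int>"
    using common_denominator_fst by blast
  let ?b = "cleared_sum N (supp h) h"
  have b: "?b \<in> A"
    using \<open>supp h \<subseteq> R \<times> A\<close> by (intro cleared_sum_mem[OF A]) auto
  have "?b \<in> saturation (inv_nats R) {0}"
    using rel trel_subset_vanishing_sums N unfolding vanishing_sums_def by blast
  then obtain K where K: "K \<in> inv_nats R" "int_scale (int K) ?b = 0"
    unfolding saturation_def by blast
  have "tensor_eq R A h (delta (1 / of_nat N, ?b))"
    using tensor_eq_delta_cleared_sum[OF A h N] .
  also have "tensor_eq R A \<dots> (delta (1 / of_nat (N * K), int_scale (int K) ?b))"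
    using tensor_eq_delta_rescale[OF A N(1) K(1) b] .
  also have "tensor_eq R A \<dots> 0"
    using mult_mem[OF N(1) K(1)] K(2) is_subgrp_zero[OF A]
    by (auto simp: inv_nats_def intro: tensor_additive_zero[OF tensor_additive_delta_right])
  finally show ?thesis
    by (simp add: tensor_eq_def)
qed

lemma ex_tensor_eq_free_ab_subgroup:
  assumes A: "is_subgrp A" and sat: "saturation (inv_nats R) A = UNIV" and h: "h \<in> free_ab R UNIV"
  shows "\<exists>f\<in>free_ab R A. tensor_eq R UNIV h f"
proof -
  have "finite (supp h)" "supp h \<subseteq> R \<times> UNIV"
    using h by (simp_all add: free_ab_iff)
  then obtain N where N: "N \<in> inv_nats R" "\<forall>x\<in>supp h. of_nat N * fst x \<in> \<int>"
    using common_denominator_fst by blast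
  let ?b = "cleared_sum N (supp h) h"
  obtain K where K: "K \<in> inv_nats R" "int_scale (int K) ?b \<in> A"
    using sat unfolding saturation_def by blast
  have "tensor_eq R UNIV h (delta (1 / of_nat N, ?b))"
    using tensor_eq_delta_cleared_sum[OF is_subgrp_UNIV h N] .
  also have "tensor_eq R UNIV \<dots> (delta (1 / of_nat (N * K), int_scale (int K) ?b))"
    using tensor_eq_delta_rescale[OF is_subgrp_UNIV N(1) K(1)] by simp
  finally have "tensor_eq R UNIV h (delta (1 / of_nat (N * K), int_scale (int K) ?b))" .
  moreover have "delta (1 / of_nat (N * K), int_scale (int K) ?b) \<in> free_ab R A"
    using mult_mem[OF N(1) K(1)] K(2) by (intro free_ab_delta) (simp add: inv_nats_def)
  ultimately show ?thesis
    by blast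
qed

end

lemma mem_tcls_iff: "g \<in> tcls R M f \<longleftrightarrow> g \<in> free_ab R M \<and> tensor_eq R M g f"
  by (simp add: tcls_def tensor_eq_def fun_diff_def)

lemma tcls_eq_iff:
  assumes "f \<in> free_ab R M"
  shows "tcls R M f = tcls R M g \<longleftrightarrow> tensor_eq R M f g"
proof
  assume "tcls R M f = tcls R M g"
  moreover have "f \<in> tcls R M f"
    using assms by (simp add: mem_tcls_iff)
  ultimately show "tensor_eq R M f g"
    by (simp add: mem_tcls_iff)
next
  assume "tensor_eq R M f g"
  then have "tensor_eq R M h f \<longleftrightarrow> tensor_eq R M h g" for h
    using tensor_eq_sym tensor_eq_trans by metis
  then show "tcls R M f = tcls R M g"
    by (simp add: set_eq_iff mem_tcls_iff)
qed

lemma tensor_map_tcls: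
  assumes f: "f \<in> free_ab R M" and MN: "M \<subseteq> N"
  shows "tensor_map R N (tcls R M f) = tcls R N f"
proof -
  let ?g = "SOME g. g \<in> tcls R M f"
  have "f \<in> tcls R M f"
    using f by (simp add: mem_tcls_iff)
  then have "?g \<in> tcls R M f"
    by (rule someI[where P = "\<lambda>g. g \<in> tcls R M f"])
  then have "tensor_eq R N f ?g"
    using MN by (blast intro: tensor_eq_sym tensor_eq_mono dest: mem_tcls_iff[THEN iffD1])
  moreover have "f \<in> free_ab R N"
    using f free_ab_mono[OF MN] by blast
  ultimately have "tcls R N f = tcls R N ?g"
    by (simp add: tcls_eq_iff)
  then show ?thesis
    unfolding tensor_map_def by simp
qed

theorem (in rat_subring) tensor_map_bij:
  fixes A :: "'a::ab_group_add set"
  assumes A: "is_subgrp A" and sat: "saturation (inv_nats R) A = UNIV"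
  shows "bij_betw (tensor_map R UNIV) (tensor R A) (tensor R UNIV)"
proof (rule bij_betw_imageI)
  show "inj_on (tensor_map R UNIV) (tensor R A)"
  proof (rule inj_onI)
    fix X Y assume "X \<in> tensor R A" "Y \<in> tensor R A"
      and eq: "tensor_map R UNIV X = tensor_map R UNIV Y"
    then obtain f g where f: "f \<in> free_ab R A" "X = tcls R A f"
      and g: "g \<in> free_ab R A" "Y = tcls R A g"
      unfolding tensor_def by blast
    have "tcls R UNIV f = tcls R UNIV g"
      using eq f g by (simp add: tensor_map_tcls)
    moreover have "f \<in> free_ab R UNIV"
      using f(1) free_ab_mono[of A UNIV R] by blast
    ultimately have "f - g \<in> trel R UNIV"
      by (simp add: tcls_eq_iff tensor_eq_def)
    then have "tensor_eq R A f g"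
      unfolding tensor_eq_def by (rule trel_restrict_subgroup[OF A free_ab_diff[OF f(1) g(1)]])
    then show "X = Y"
      using f g by (simp add: tcls_eq_iff)
  qed
  show "tensor_map R UNIV ` tensor R A = tensor R UNIV"
  proof
    show "tensor_map R UNIV ` tensor R A \<subseteq> tensor R UNIV"
      using free_ab_mono[of A UNIV R] by (auto simp: tensor_def tensor_map_tcls intro!: imageI)
  next
    show "tensor R UNIV \<subseteq> tensor_map R UNIV ` tensor R A"
    proof
      fix Z :: "(rat \<times> 'a \<Rightarrow> int) set"
      assume "Z \<in> tensor R UNIV"
      then obtain h where h: "h \<in> free_ab R UNIV" "Z = tcls R UNIV h"
        unfolding tensor_def by blast
      then obtain f where f: "f \<in> free_ab R A" "tensor_eq R UNIV h f"
        using ex_tensor_eq_free_ab_subgroup[OF A sat] by blast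
      then have "Z = tensor_map R UNIV (tcls R A f)"
        using h by (simp add: tcls_eq_iff tensor_map_tcls)
      then show "Z \<in> tensor_map R UNIV ` tensor R A"
        using f(1) unfolding tensor_def by blast
    qed
  qed
qed

theorem lemma3p21:
  fixes G :: "('g, 'm) monoid_scheme"
    and S :: "'g set"
    and A :: "'a::ab_group_add set"
    and \<sigma> :: "'g \<Rightarrow> 'a \<Rightarrow> 'a"
  assumes grp: "group G"
    and S_sub: "S \<subseteq> carrier G" and S_one: "\<one>\<^bsub>G\<^esub> \<in> S"
    and S_mult: "\<forall>s\<in>S. \<forall>t\<in>S. s \<otimes>\<^bsub>G\<^esub> t \<in> S"
    and S_gen: "generate G S = carrier G"
    and act_aut: "\<forall>g\<in>carrier G. bij (\<sigma> g) \<and> (\<forall>x y. \<sigma> g (x + y) = \<sigma> g x + \<sigma> g y)"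
    and act_one: "\<sigma> \<one>\<^bsub>G\<^esub> = id"
    and act_mult: "\<forall>g\<in>carrier G. \<forall>h\<in>carrier G. \<sigma> (g \<otimes>\<^bsub>G\<^esub> h) = \<sigma> g \<circ> \<sigma> h"
    and A_sub: "is_subgrp A"
    and A_inv: "\<forall>s\<in>S. \<sigma> s ` A \<subseteq> A"
    and faithful: "\<forall>s\<in>S. \<forall>t\<in>S. (\<forall>a\<in>A. \<sigma> s a = \<sigma> t a) \<longrightarrow> s = t"
    and non_aut: "\<forall>s\<in>S. \<sigma> s ` A = A \<longrightarrow> inv\<^bsub>G\<^esub> s \<in> S"
    and FI: "\<forall>s\<in>S. finite (cosets_in A (\<sigma> s ` A))"
    and JF: "\<forall>C\<in>constructible S \<sigma> A. \<forall>g\<in>carrier G. (\<forall>c\<in>C. \<sigma> g c = c) \<longrightarrow> g = \<one>\<^bsub>G\<^esub>"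
    and gen: "gen_subgrp (\<Union>g\<in>carrier G. \<sigma> g ` A) = UNIV"
  shows "bij_betw (tensor_map (Z_inv (index_in A ` constructible S \<sigma> A)) UNIV)
           (tensor (Z_inv (index_in A ` constructible S \<sigma> A)) A)
           (tensor (Z_inv (index_in A ` constructible S \<sigma> A)) UNIV)"
proof -
  let ?R = "Z_inv (index_in A ` constructible S \<sigma> A)"
  interpret rat_subring ?R
    by (rule rat_subring.intro[OF is_subring_rat_Z_inv])
  have additive: "\<forall>g\<in>carrier G. additive (\<sigma> g)"
    using act_aut by (simp add: additive_def)
  have index: "\<forall>s\<in>S. index_in A (\<sigma> s ` A) \<in> inv_nats ?R"
  proof
    fix s assume s: "s \<in> S"
    then have "\<sigma> s ` A \<in> constructible S \<sigma> A"
      by (intro constructible.img constructible.top)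
    moreover have "0 < index_in A (\<sigma> s ` A)"
      using index_in_pos[OF A_sub] FI s by blast
    ultimately show "index_in A (\<sigma> s ` A) \<in> inv_nats ?R"
      by (simp add: inv_nats_def Z_inv_inverse)
  qed
  have "(\<Union>g\<in>carrier G. \<sigma> g ` A) \<subseteq> saturation (inv_nats ?R) A"
    using generate_image_subset_saturation[OF grp S_sub additive act_one act_mult A_sub A_inv index]
      S_gen
    by blast
  then have "saturation (inv_nats ?R) A = UNIV"
    using gen gen_subgrp_least[OF is_subgrp_saturation[OF A_sub]] by blast
  then show ?thesis
    by (rule tensor_map_bij[OF A_sub])
qed

end
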